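(* Let $\Upsilon$ be a bundle that is a run of the protocol $\Pi$ and is compatible with $\leadsto$. For all strands $z_0,z_1$, all messages $t,t_0,t_1$, all states $m_0,m_1$ and all keys $esk_0,esk_1,k_0,k_1$: if $\mathrm{htin}(z_0,2,\mathrm{extend}(esk_0,k_0,\mathrm{pcr}(m_0),t_0))$, $\mathrm{htin}(z_1,2,\mathrm{extend}(esk_1,k_1,\mathrm{pcr}(m_1),t_1))$, $(z_0,1)\prec(z_1,0)$, and $m_1$ has $t$, then either $\mathrm{ex}(t_0,m_0)$ is a subterm of $m_1$, or there exist a strand $z$, a state $m$ and keys $esk,k$ such that $\mathrm{htin}(z,2,\mathrm{extend}(esk,k,\mathrm{pcr}(m),t))$, $(z_0,1)\prec(z,0)$ and $(z,1)\prec(z_1,0)$.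
   Context: Messages are terms of a free order-sorted algebra with atom sorts $\mathsf{A}$ (asymmetric keys), $\mathsf{S}$ (symmetric keys), $\mathsf{D}$, $\mathsf{E}$, tag constants $g_0,g_1,\dots$, pairing $(\cdot,\cdot)$, encryption $\{t\}_k$, hashing $\#(t)$ (of sort $\mathsf{S}$), and key inverse (asymmetric $a_i^{-1}=b_i$, symmetric keys self-inverse); $s_0$ is a fixed symmetric-key constant. TPM states are terms generated by $\mathrm{bt}$ and $\mathrm{ex}(t,m)$ ($t$ a message, $m$ a state). $\mathrm{pcr}$ maps states to messages: $\mathrm{pcr}(\mathrm{bt})=s_0$, $\mathrm{pcr}(\mathrm{ex}(t,m))=\#(t,\mathrm{pcr}(m))$; $\mathrm{pcr}$ is assumed injective. The transition relation: $m_0\leadsto m_1$ iff $m_1=\mathrm{bt}$, or $m_1=\mathrm{ex}(t,m_0)$ for some $t$, or $m_0=m_1$. A path is $\pi:\mathbb{N}\to$ states with $\pi(0)=\mathrm{bt}$ and $\pi(i)\leadsto\pi(i+1)$. A state $m$ has $t$ if some $\mathrm{ex}(t,m')$ is a subterm of $m$; state $m$ is a subterm of $m'$ if $m'=\mathrm{ex}(t_1,\dots\mathrm{ex}(t_r,m)\dots)$, $r\ge0$. Strand spaces: a trace is a finite sequence of events $+t$ (transmit) or $-t$ (receive). A strand space $\Theta$ maps strands to traces; nodes are $(s,i)$ with $0\le i<|\Theta(s)|$. A bundle $(\Theta,\to)$ is a finite acyclic graph on the nodes whose edges are communication edges $n_0\to n_1$ (with $n_0$ transmitting and $n_1$ receiving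 the same message, every reception having exactly one incoming such edge) and strand-succession edges $(s,i)\Rightarrow(s,i+1)$; $\prec$ is the transitive closure of $\to\cup\Rightarrow$. A bundle is a run of $\Pi$ if each strand's trace is a prefix of some trace of some role of $\Pi$ (the adversary roles create/tag/pair/separate/encrypt/decrypt/hash, the TPM roles boot, extend, quote, decrypt, createkey, and Alice's role). $\mathrm{htin}(z,h,c)$ means strand $z$ has at least $h$ events and its trace is a prefix of $c$. Here, following the paper's abbreviation, $\mathrm{extend}(esk,k,p,t)$ denotes the state-bearing portion of the TPM extend role, the trace $-\{g_0,p\}_{\#k}\Rightarrow+\{g_0,\#(t,p)\}_{\#k}$, so $(z,0)$ receives the incoming state and $(z,1)$ transmits the outgoing state. Annotations: in each TPM role with a state-bearing pair $-\{g_0,p_0\}_{\#k}\Rightarrow+\{g_0,p_1\}_{\#k}$ (extend: $p_1=\#(t,p_0)$; boot: $p_1=s_0$; quote and decrypt: $p_1=p_0$), the transmission is annotated with $\{(m_0,m_1)\mid p_0=\mathrm{pcr}(m_0),\ p_1=\mathrm{pcr}(m_1)\}\cap\leadsto$; no other events are annotated, and a node annotated by the extend role is an instance of no other role. A bundle $\Upsilon$ is compatible with $\leadsto$ if there exist $\ell\in\mathbb{N}$, a bijection $f$ from the annotated nodes of $\Upsilon$ to $\{0,\dots,\ell-1\}$, and a path $\pi$ such that $n_0\prec n_1\iff f(n_0)<f(n_1)$ for annotated nodes, and every annotated node $n$ with annotation $a$ satisfies $(\pi(f(n)),\pi(f(n)+1))\in a$. *)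

theory Defs
  imports Main "HOL-Library.Sublist"
begin

text \<open>Atoms: asymmetric keys AKey i (a_i) and BKey i (b_i = a_i inverse),
  symmetric-key atoms SKey i and the fixed symmetric constant S0 (s_0), atoms of sorts D and E,
  tag constants Tag i (g_i), pairing, encryption Enc t k (t encrypted under k), hashing.\<close>

datatype msg =
    AKey nat | BKey nat | SKey nat | S0 | DAtom nat | EAtom nat | Tag nat
  | Pair msg msg | Enc msg msg | Hash msg

fun inv :: "msg \<Rightarrow> msg" where
  "inv (AKey i) = BKey i"
| "inv (BKey i) = AKey i"
| "inv m = m"

datatype state = Bt | Ex msg state

fun pcr :: "state \<Rightarrow> msg" where
  "pcr Bt = S0"
| "pcr (Ex t m) = Hash (Pair t (pcr m))"

definition trans :: "state \<Rightarrow> state \<Rightarrow> bool" (infix "\<leadsto>" 50) where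
  "m0 \<leadsto> m1 \<longleftrightarrow> m1 = Bt \<or> (\<exists>t. m1 = Ex t m0) \<or> m0 = m1"

definition path :: "(nat \<Rightarrow> state) \<Rightarrow> bool" where
  "path \<pi> \<longleftrightarrow> \<pi> 0 = Bt \<and> (\<forall>i. \<pi> i \<leadsto> \<pi> (Suc i))"

inductive substate :: "state \<Rightarrow> state \<Rightarrow> bool" where
  refl: "substate m m"
| ex: "substate m m' \<Longrightarrow> substate m (Ex t m')"

definition has :: "state \<Rightarrow> msg \<Rightarrow> bool" where
  "has m t \<longleftrightarrow> (\<exists>m'. substate (Ex t m') m)"

datatype event = Send msg | Recv msg

type_synonym 's node = "'s \<times> nat"

definition evt :: "('s \<Rightarrow> event list) \<Rightarrow> 's node \<Rightarrow> event" where
  "evt \<Theta> n = \<Theta> (fst n) ! snd n"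

definition nodes :: "('s \<Rightarrow> event list) \<Rightarrow> 's node set" where
  "nodes \<Theta> = {(s, i). i < length (\<Theta> s)}"

definition succ_edges :: "('s \<Rightarrow> event list) \<Rightarrow> ('s node \<times> 's node) set" where
  "succ_edges \<Theta> = {((s, i), (s, Suc i)) | s i. Suc i < length (\<Theta> s)}"

definition is_recv :: "event \<Rightarrow> bool" where
  "is_recv e \<longleftrightarrow> (\<exists>t. e = Recv t)"

definition is_bundle :: "('s \<Rightarrow> event list) \<Rightarrow> ('s node \<times> 's node) set \<Rightarrow> bool" where
  "is_bundle \<Theta> comm \<longleftrightarrow>
     finite (nodes \<Theta>) \<and>
     comm \<subseteq> nodes \<Theta> \<times> nodes \<Theta> \<and>
     (\<forall>(n0, n1) \<in> comm. \<exists>t. evt \<Theta> n0 = Send t \<and> evt \<Theta> n1 = Recv t) \<and>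
     (\<forall>n \<in> nodes \<Theta>. is_recv (evt \<Theta> n) \<longrightarrow> (\<exists>!n0. (n0, n) \<in> comm)) \<and>
     acyclic (comm \<union> succ_edges \<Theta>)"

definition prec :: "('s \<Rightarrow> event list) \<Rightarrow> ('s node \<times> 's node) set \<Rightarrow> ('s node \<times> 's node) set" where
  "prec \<Theta> comm = (comm \<union> succ_edges \<Theta>)\<^sup>+"

type_synonym annot = "(state \<times> state) set"
type_synonym atrace = "event list \<times> (nat \<Rightarrow> annot option)"

definition ann_set :: "msg \<Rightarrow> msg \<Rightarrow> annot" where
  "ann_set p0 p1 = {(m0, m1). p0 = pcr m0 \<and> p1 = pcr m1} \<inter> {(m0, m1). m0 \<leadsto> m1}"

definition is_atom :: "msg \<Rightarrow> bool" where
  "is_atom a \<longleftrightarrow> (\<exists>i. a = AKey i \<or> a = BKey i \<or> a = SKey i \<or> a = DAtom i \<or> a = EAtom i) \<or> a = S0"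

definition adversary_traces :: "event list set" where
  "adversary_traces =
      {[Send a] | a. is_atom a}
    \<union> {[Send (Tag i)] | i. True}
    \<union> {[Recv t0, Recv t1, Send (Pair t0 t1)] | t0 t1. True}
    \<union> {[Recv (Pair t0 t1), Send t0, Send t1] | t0 t1. True}
    \<union> {[Recv t, Recv k, Send (Enc t k)] | t k. True}
    \<union> {[Recv (Enc t k), Recv (inv k), Send t] | t k. True}
    \<union> {[Recv t, Send (Hash t)] | t. True}"

text \<open>Following the paper's abbreviation, extend(esk,k,p,t) is the state-bearing portion
  of the TPM extend role; the session key esk does not occur in it.\<close>
definition extend :: "msg \<Rightarrow> msg \<Rightarrow> msg \<Rightarrow> msg \<Rightarrow> event list" where
  "extend esk k p t =
     [Recv (Enc (Pair (Tag 0) p) (Hash k)), Send (Enc (Pair (Tag 0) (Hash (Pair t p))) (Hash k))]"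

definition extend_role :: "atrace set" where
  "extend_role = {(extend esk k p t,
                   \<lambda>i. if i = 1 then Some (ann_set p (Hash (Pair t p))) else None) | esk k p t. True}"

text \<open>Well-formedness of the remaining roles of the protocol (boot, quote, decrypt, createkey,
  Alice): the only annotated events are the transmissions of state-bearing pairs
  -{g0,p0}_(#k) => +{g0,p1}_(#k) with p1 = s0 (boot) or p1 = p0 (quote, decrypt),
  annotated with ann_set p0 p1.\<close>
definition ok_other_roles :: "atrace set \<Rightarrow> bool" where
  "ok_other_roles R \<longleftrightarrow>
     (\<forall>(c, ann) \<in> R. \<forall>i a. ann i = Some a \<longrightarrow>
        (\<exists>p0 p1 k. 0 < i \<and> i < length c \<and>
           c ! (i - 1) = Recv (Enc (Pair (Tag 0) p0) (Hash k)) \<and>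
           c ! i = Send (Enc (Pair (Tag 0) p1) (Hash k)) \<and>
           (p1 = S0 \<or> p1 = p0) \<and> a = ann_set p0 p1))"

definition protocol :: "atrace set \<Rightarrow> atrace set" where
  "protocol R = {(c, \<lambda>_. None) | c. c \<in> adversary_traces} \<union> extend_role \<union> R"

definition run_of :: "atrace set \<Rightarrow> ('s \<Rightarrow> event list) \<Rightarrow> ('s node \<times> 's node) set \<Rightarrow> bool" where
  "run_of P \<Theta> comm \<longleftrightarrow> is_bundle \<Theta> comm \<and> (\<forall>s. \<exists>(c, ann) \<in> P. prefix (\<Theta> s) c)"

definition annotation :: "atrace set \<Rightarrow> ('s \<Rightarrow> event list) \<Rightarrow> 's node \<Rightarrow> annot \<Rightarrow> bool" where
  "annotation P \<Theta> n a \<longleftrightarrow> n \<in> nodes \<Theta> \<and>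
     (\<exists>(c, ann) \<in> P. prefix (\<Theta> (fst n)) c \<and> ann (snd n) = Some a)"

definition annotated_nodes :: "atrace set \<Rightarrow> ('s \<Rightarrow> event list) \<Rightarrow> 's node set" where
  "annotated_nodes P \<Theta> = {n. \<exists>a. annotation P \<Theta> n a}"

definition compatible :: "atrace set \<Rightarrow> ('s \<Rightarrow> event list) \<Rightarrow> ('s node \<times> 's node) set \<Rightarrow> bool" where
  "compatible P \<Theta> comm \<longleftrightarrow>
     (\<exists>(len::nat) f \<pi>. bij_betw f (annotated_nodes P \<Theta>) {..<len} \<and> path \<pi> \<and>
        (\<forall>n0 \<in> annotated_nodes P \<Theta>. \<forall>n1 \<in> annotated_nodes P \<Theta>.
            (n0, n1) \<in> prec \<Theta> comm \<longleftrightarrow> f n0 < f n1) \<and>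
        (\<forall>n a. annotation P \<Theta> n a \<longrightarrow> (\<pi> (f n), \<pi> (Suc (f n))) \<in> a))"

definition htin :: "('s \<Rightarrow> event list) \<Rightarrow> 's \<Rightarrow> nat \<Rightarrow> event list \<Rightarrow> bool" where
  "htin \<Theta> z h c \<longleftrightarrow> h \<le> length (\<Theta> z) \<and> prefix (\<Theta> z) c"

end

theory Submission
  imports Defs
begin

text \<open>
  Compatibility linearises the annotated nodes of the bundle by a bijection
  f onto an initial segment of the naturals and a path \<pi> such that each annotated node n
  is witnessed by the step \<pi> (f n) \<leadsto> \<pi> (Suc (f n)).  Since pcr is injective, the
  transmission node (z,1) of an extend strand with incoming state m and extended value t
  forces this step to be exactly m \<leadsto> Ex t m.  Conversely, a genuine extension step
  \<pi> k \<leadsto> Ex t (\<pi> k) can only be witnessed by an extend strand, because the other roles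
  either reboot or leave the PCR unchanged.  Along a path, a state containing t either
  still contains an earlier state as a substate, or t was added by an extension step in
  between.  Applying this between the positions of (z0,1) and (z1,1), and translating the
  order of positions back into the bundle order (the node (z,1) of an extend strand is
  preceded exactly by (z,0) and its predecessors), gives the theorem.
\<close>

text \<open>The PCR value determines the state (the paper assumes pcr injective; here it is
  a consequence of the free message algebra).\<close>
lemma pcr_inj: "pcr x = pcr y \<Longrightarrow> x = y"
proof (induction x arbitrary: y)
  case Bt then show ?case by (cases y) auto
next
  case (Ex t m) then show ?case by (cases y) auto
qed

text \<open>Extending never leaves a PCR value unchanged (needed to rule out quote/decrypt).\<close>
lemma Hash_Pair_neq: "Hash (Pair s p) \<noteq> p"
proof
  assume "Hash (Pair s p) = p"
  then have "size (Hash (Pair s p)) = size p" by simp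
  then show False by simp
qed

lemma ann_set_extend_iff:
  "(x, y) \<in> ann_set (pcr m) (Hash (Pair t (pcr m))) \<longleftrightarrow> x = m \<and> y = Ex t m"
proof
  assume "(x, y) \<in> ann_set (pcr m) (Hash (Pair t (pcr m)))"
  then have "pcr x = pcr m" "pcr y = pcr (Ex t m)" unfolding ann_set_def by auto
  then show "x = m \<and> y = Ex t m" using pcr_inj by metis
next
  assume "x = m \<and> y = Ex t m"
  then show "(x, y) \<in> ann_set (pcr m) (Hash (Pair t (pcr m)))"
    unfolding ann_set_def trans_def by auto
qed

lemma has_Bt: "\<not> has Bt t"
  unfolding has_def by (auto elim: substate.cases)

lemma has_Ex: "has (Ex s m) t \<Longrightarrow> s = t \<or> has m t"
  unfolding has_def by (auto elim: substate.cases)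

lemma path_has_extension:
  assumes "path \<pi>" and "i0 \<le> i" and "has (\<pi> i) t"
  shows "substate (\<pi> i0) (\<pi> i) \<or> (\<exists>k. i0 \<le> k \<and> k < i \<and> \<pi> (Suc k) = Ex t (\<pi> k))"
  using assms(2,3)
proof (induction i)
  case 0 then show ?case by (auto intro: substate.refl)
next
  case (Suc i)
  show ?case
  proof (cases "i0 = Suc i")
    case True then show ?thesis by (auto intro: substate.refl)
  next
    case False
    then have le: "i0 \<le> i" using Suc.prems by simp
    have "\<pi> i \<leadsto> \<pi> (Suc i)" using assms(1) unfolding path_def by auto
    then consider "\<pi> (Suc i) = Bt" | s where "\<pi> (Suc i) = Ex s (\<pi> i)" | "\<pi> (Suc i) = \<pi> i"
      unfolding trans_def by auto
    then show ?thesis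
    proof cases
      case 1 then show ?thesis using Suc.prems has_Bt by metis
    next
      case (2 s)
      then have "s = t \<or> has (\<pi> i) t" using Suc.prems has_Ex by metis
      then show ?thesis
      proof
        assume "s = t" then show ?thesis using 2 le by auto
      next
        assume "has (\<pi> i) t"
        then show ?thesis using Suc.IH le 2 by (auto intro: substate.ex less_SucI)
      qed
    next
      case 3 then show ?thesis using Suc.IH le Suc.prems by (auto intro: less_SucI)
    qed
  qed
qed

lemma htin_extend:
  "htin \<Theta> z 2 (extend esk k p t) \<Longrightarrow> \<Theta> z = extend esk k p t"
  unfolding htin_def using prefix_length_less[of "\<Theta> z" "extend esk k p t"]
  by (force simp: extend_def strict_prefix_def)

text \<open>The transmission node of an extend strand is reached only through its reception
  node, since a transmission has no incoming communication edge.\<close>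
lemma prec_extend_send_iff:
  assumes b: "is_bundle \<Theta> comm" and h: "htin \<Theta> z 2 (extend esk k p t)"
  shows "(x, (z, 1)) \<in> prec \<Theta> comm \<longleftrightarrow> x = (z, 0) \<or> (x, (z, 0)) \<in> prec \<Theta> comm"
proof -
  have ez: "\<Theta> z = extend esk k p t" using htin_extend[OF h] .
  have succ: "((z, 0), (z, 1)) \<in> succ_edges \<Theta>" using ez unfolding succ_edges_def extend_def by auto
  have edge: "c = (z, 0)" if "(c, (z, 1)) \<in> comm \<union> succ_edges \<Theta>" for c
  proof -
    have "evt \<Theta> (z, 1) = Send (Enc (Pair (Tag 0) (Hash (Pair t p))) (Hash k))"
      using ez unfolding evt_def extend_def by simp
    then have "(c, (z, 1)) \<notin> comm" using b unfolding is_bundle_def by fastforce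
    then show ?thesis using that unfolding succ_edges_def by auto
  qed
  show ?thesis
  proof
    assume "(x, (z, 1)) \<in> prec \<Theta> comm"
    then have "(x, (z, 1)) \<in> (comm \<union> succ_edges \<Theta>)\<^sup>+" unfolding prec_def .
    then show "x = (z, 0) \<or> (x, (z, 0)) \<in> prec \<Theta> comm"
    proof (cases rule: tranclE)
      case base then show ?thesis using edge by blast
    next
      case (step c) then show ?thesis using edge unfolding prec_def by blast
    qed
  next
    assume "x = (z, 0) \<or> (x, (z, 0)) \<in> prec \<Theta> comm"
    then show "(x, (z, 1)) \<in> prec \<Theta> comm"
      using succ unfolding prec_def by (auto intro: trancl_into_trancl)
  qed
qed

lemma extend_annotation:
  assumes "htin \<Theta> z 2 (extend esk k (pcr m) t)"
  shows "annotation (protocol R) \<Theta> (z, 1) (ann_set (pcr m) (Hash (Pair t (pcr m))))"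
proof -
  have ez: "\<Theta> z = extend esk k (pcr m) t" using htin_extend[OF assms] .
  have role: "(extend esk k (pcr m) t,
      \<lambda>i. if i = 1 then Some (ann_set (pcr m) (Hash (Pair t (pcr m)))) else None) \<in> protocol R"
    unfolding protocol_def extend_role_def by blast
  have "(z, 1) \<in> nodes \<Theta>" using ez unfolding nodes_def extend_def by simp
  then show ?thesis using ez unfolding annotation_def by (auto intro!: bexI[OF _ role])
qed

text \<open>Only extend strands annotate a proper extension step: adversary nodes carry no
  annotation, and boot, quote and decrypt annotate reboots or unchanged PCRs.\<close>
lemma extension_annotation_is_extend:
  assumes ok: "ok_other_roles R" and an: "annotation (protocol R) \<Theta> n a"
    and mem: "(x, Ex s x) \<in> a"
  shows "\<exists>esk k. snd n = 1 \<and> htin \<Theta> (fst n) 2 (extend esk k (pcr x) s)"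
proof -
  from an obtain c ann where nn: "n \<in> nodes \<Theta>" and cp: "(c, ann) \<in> protocol R"
    and pf: "prefix (\<Theta> (fst n)) c" and aa: "ann (snd n) = Some a"
    unfolding annotation_def by auto
  from cp consider "ann = (\<lambda>_. None)" | "(c, ann) \<in> extend_role" | "(c, ann) \<in> R"
    unfolding protocol_def by auto
  then show ?thesis
  proof cases
    case 1 then show ?thesis using aa by simp
  next
    case 2
    then obtain esk k p t' where c: "c = extend esk k p t'"
      and ann: "ann = (\<lambda>i. if i = 1 then Some (ann_set p (Hash (Pair t' p))) else None)"
      unfolding extend_role_def by auto
    have s1: "snd n = 1" using aa ann by (auto split: if_splits)
    then have "a = ann_set p (Hash (Pair t' p))" using aa ann by simp
    with mem have "p = pcr x" "t' = s" unfolding ann_set_def by auto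
    moreover have "1 < length (\<Theta> (fst n))" using nn s1 unfolding nodes_def by auto
    ultimately show ?thesis using s1 pf c unfolding htin_def by auto
  next
    case 3
    have "\<forall>i a. ann i = Some a \<longrightarrow> (\<exists>p0 p1 k. 0 < i \<and> i < length c \<and>
           c ! (i - 1) = Recv (Enc (Pair (Tag 0) p0) (Hash k)) \<and>
           c ! i = Send (Enc (Pair (Tag 0) p1) (Hash k)) \<and>
           (p1 = S0 \<or> p1 = p0) \<and> a = ann_set p0 p1)"
      using ok 3 unfolding ok_other_roles_def by blast
    then obtain p0 p1 where p1: "p1 = S0 \<or> p1 = p0" and "a = ann_set p0 p1"
      using aa by blast
    with mem have "p0 = pcr x" "p1 = Hash (Pair s (pcr x))" unfolding ann_set_def by auto
    with p1 Hash_Pair_neq show ?thesis by auto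
  qed
qed

lemma extend_position:
  assumes h: "htin \<Theta> z 2 (extend esk k (pcr m) t)"
    and an: "\<forall>n a. annotation (protocol R) \<Theta> n a \<longrightarrow> (\<pi> (f n), \<pi> (Suc (f n))) \<in> a"
  shows "(z, 1) \<in> annotated_nodes (protocol R) \<Theta> \<and>
         \<pi> (f (z, 1)) = m \<and> \<pi> (Suc (f (z, 1))) = Ex t m"
  using extend_annotation[OF h] an ann_set_extend_iff unfolding annotated_nodes_def by blast

lemma extend_order:
  assumes b: "is_bundle \<Theta> comm" and h: "htin \<Theta> z' 2 (extend esk k p t)"
    and N: "(z, 1) \<in> A" and N': "(z', 1) \<in> A"
    and ord: "\<forall>n0 \<in> A. \<forall>n1 \<in> A. (n0, n1) \<in> prec \<Theta> comm \<longleftrightarrow> f n0 < f n1"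
  shows "((z, 1), (z', 0)) \<in> prec \<Theta> comm \<longleftrightarrow> f (z, 1) < f (z', 1)"
  using prec_extend_send_iff[OF b h, of "(z, 1)"] ord N N' by auto

lemma extension_step_is_extend:
  assumes ok: "ok_other_roles R"
    and bij: "bij_betw f (annotated_nodes (protocol R) \<Theta>) {..<len}"
    and an: "\<forall>n a. annotation (protocol R) \<Theta> n a \<longrightarrow> (\<pi> (f n), \<pi> (Suc (f n))) \<in> a"
    and k: "k < len" and step: "\<pi> (Suc k) = Ex t (\<pi> k)"
  shows "\<exists>z esk kk. htin \<Theta> z 2 (extend esk kk (pcr (\<pi> k)) t) \<and>
            (z, 1) \<in> annotated_nodes (protocol R) \<Theta> \<and> f (z, 1) = k"
proof -
  obtain n where nN: "n \<in> annotated_nodes (protocol R) \<Theta>" and fn: "f n = k"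
    using k bij unfolding bij_betw_def by (metis imageE lessThan_iff)
  then obtain a where na: "annotation (protocol R) \<Theta> n a" unfolding annotated_nodes_def by blast
  then have "(\<pi> k, Ex t (\<pi> k)) \<in> a" using an fn step by metis
  from extension_annotation_is_extend[OF ok na this] show ?thesis
    using nN fn by (cases n) auto
qed

theorem theorem1:
  fixes \<Theta> :: "'s \<Rightarrow> event list" and comm :: "('s node \<times> 's node) set"
    and R :: "atrace set"
    and z0 z1 :: 's and t t0 t1 :: msg and m0 m1 :: state and esk0 esk1 k0 k1 :: msg
  assumes "ok_other_roles R"
    and "run_of (protocol R) \<Theta> comm"
    and "compatible (protocol R) \<Theta> comm"
    and "htin \<Theta> z0 2 (extend esk0 k0 (pcr m0) t0)"
    and "htin \<Theta> z1 2 (extend esk1 k1 (pcr m1) t1)"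
    and "((z0, 1), (z1, 0)) \<in> prec \<Theta> comm"
    and "has m1 t"
  shows "substate (Ex t0 m0) m1 \<or>
         (\<exists>z m esk k. htin \<Theta> z 2 (extend esk k (pcr m) t) \<and>
            ((z0, 1), (z, 0)) \<in> prec \<Theta> comm \<and> ((z, 1), (z1, 0)) \<in> prec \<Theta> comm)"
proof -
  have b: "is_bundle \<Theta> comm" using assms(2) unfolding run_of_def by auto
  from assms(3) obtain len f \<pi>
    where bij: "bij_betw f (annotated_nodes (protocol R) \<Theta>) {..<len}" and p: "path \<pi>"
      and ord: "\<forall>n0 \<in> annotated_nodes (protocol R) \<Theta>. \<forall>n1 \<in> annotated_nodes (protocol R) \<Theta>.
                  (n0, n1) \<in> prec \<Theta> comm \<longleftrightarrow> f n0 < f n1"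
      and an: "\<forall>n a. annotation (protocol R) \<Theta> n a \<longrightarrow> (\<pi> (f n), \<pi> (Suc (f n))) \<in> a"
    unfolding compatible_def by blast
  obtain N0: "(z0, 1) \<in> annotated_nodes (protocol R) \<Theta>" and pi0: "\<pi> (Suc (f (z0, 1))) = Ex t0 m0"
    using extend_position[OF assms(4) an] by blast
  obtain N1: "(z1, 1) \<in> annotated_nodes (protocol R) \<Theta>" and pi1: "\<pi> (f (z1, 1)) = m1"
    using extend_position[OF assms(5) an] by blast
  have "f (z0, 1) < f (z1, 1)" using extend_order[OF b assms(5) N0 N1 ord] assms(6) by simp
  then have "substate (Ex t0 m0) m1 \<or>
             (\<exists>k. Suc (f (z0, 1)) \<le> k \<and> k < f (z1, 1) \<and> \<pi> (Suc k) = Ex t (\<pi> k))"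
    using path_has_extension[OF p, of "Suc (f (z0, 1))" "f (z1, 1)" t] assms(7) pi0 pi1 by simp
  then show ?thesis
  proof
    assume "\<exists>k. Suc (f (z0, 1)) \<le> k \<and> k < f (z1, 1) \<and> \<pi> (Suc k) = Ex t (\<pi> k)"
    then obtain k where k0: "f (z0, 1) < k" and k1: "k < f (z1, 1)"
      and step: "\<pi> (Suc k) = Ex t (\<pi> k)" by (auto simp: Suc_le_eq)
    have "f (z1, 1) < len" using bij N1 bij_betw_apply by fastforce
    with extension_step_is_extend[OF assms(1) bij an _ step] k1 obtain z esk kk
      where h: "htin \<Theta> z 2 (extend esk kk (pcr (\<pi> k)) t)"
        and Nz: "(z, 1) \<in> annotated_nodes (protocol R) \<Theta>" and fz: "f (z, 1) = k" by auto
    have "((z0, 1), (z, 0)) \<in> prec \<Theta> comm" using extend_order[OF b h N0 Nz ord] k0 fz by simp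
    moreover have "((z, 1), (z1, 0)) \<in> prec \<Theta> comm"
      using extend_order[OF b assms(5) Nz N1 ord] k1 fz by simp
    ultimately show ?thesis using h by blast
  qed blast
qed

end
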